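(* Let $A \in \mathbb{R}^{p \times n}$, $G \in \mathbb{R}^{p \times m}$, $c_x \in \mathbb{R}^n$, $c_y \in \mathbb{R}^m$, and for a right-hand side vector $b \in \mathbb{R}^p$ consider the mixed-binary linear program \[ g(b) := \min_{x, y} \; c_x^T x + c_y^T y \quad \text{s.t.} \quad Ax + Gy \geq b,\; x \in \{0,1\}^n,\; y \in \mathbb{R}^m . \] Fix $b \in \mathbb{R}^p$. Suppose $(x^*, y^* )$ is an optimal solution of this problem (with right-hand side $b$) which is unique in the integer component, i.e. every optimal solution of the problem with right-hand side $b$ has integer part $x^*$. Suppose moreover that there is a neighborhood of $b$ such that for every $\hat b$ in this neighborhood the problem with right-hand side $\hat b$ has a feasible solution whose integer component is $x^*$. Then there exists a neighborhood of $b$ such that for all $\hat b$ in this neighborhood, $x^*$ is the integer part of the optimal solution to the corresponding problem with right-hand side $\hat b$. *)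

theory Defs
  imports "HOL-Analysis.Analysis"
begin

definition mbl_feasible ::
  "real^'n^'p \<Rightarrow> real^'m^'p \<Rightarrow> real^'p \<Rightarrow> real^'n \<Rightarrow> real^'m \<Rightarrow> bool" where
  "mbl_feasible A G b x y \<longleftrightarrow>
     (\<forall>i. (A *v x + G *v y) $ i \<ge> b $ i) \<and> (\<forall>j. x $ j \<in> {0, 1})"

definition mbl_objective :: "real^'n \<Rightarrow> real^'m \<Rightarrow> real^'n \<Rightarrow> real^'m \<Rightarrow> real" where
  "mbl_objective cx cy x y = cx \<bullet> x + cy \<bullet> y"

definition mbl_optimal ::
  "real^'n^'p \<Rightarrow> real^'m^'p \<Rightarrow> real^'n \<Rightarrow> real^'m \<Rightarrow> real^'p \<Rightarrow> real^'n \<Rightarrow> real^'m \<Rightarrow> bool" where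
  "mbl_optimal A G cx cy b x y \<longleftrightarrow>
     mbl_feasible A G b x y \<and>
     (\<forall>x' y'. mbl_feasible A G b x' y' \<longrightarrow> mbl_objective cx cy x y \<le> mbl_objective cx cy x' y')"

end

theory Submission
  imports Defs
begin

(* For a fixed binary x, the set of pairs (b', t) such that some y makes (x, y) feasible for b'
   with cost at most t is a translate of a linear image of a nonnegative orthant, i.e. of a finitely
   generated cone, and hence closed. If (b, t) lies outside that
   epigraph, all costs with integer part x stay above t + e for b' near b; applied with t the
   optimal value v to each of the finitely many binary x other than xs, uniqueness gives a uniform
   gap above v. And the value function restricted to integer part xs is attained, convex and finite
   near b, hence continuous at b, so near b it stays below that gap. *)

lemma convex_cone_hull_sum:
  "finite I \<Longrightarrow> (\<And>i. i \<in> I \<Longrightarrow> f i \<in> convex_cone hull S) \<Longrightarrow> sum f I \<in> convex_cone hull S"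
  by (induction I rule: finite_induct) (auto intro: convex_cone_hull_add convex_cone_hull_contains_0)

lemma nonneg_eq_convex_cone_hull_Basis:
  "{x::'a::ordered_euclidean_space. 0 \<le> x} = convex_cone hull Basis"
proof
  show "{x. 0 \<le> x} \<subseteq> convex_cone hull (Basis :: 'a set)"
  proof
    fix x :: 'a
    assume "x \<in> {x. 0 \<le> x}"
    then have "0 \<le> x \<bullet> i" if "i \<in> Basis" for i
      using that by (metis eucl_le inner_zero_left mem_Collect_eq)
    then have "(\<Sum>i\<in>Basis. (x \<bullet> i) *\<^sub>R i) \<in> convex_cone hull Basis"
      by (intro convex_cone_hull_sum convex_cone_hull_mul hull_inc) simp_all
    then show "x \<in> convex_cone hull Basis"
      by (simp add: euclidean_representation)
  qed
  show "convex_cone hull Basis \<subseteq> {x::'a. 0 \<le> x}"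
  proof (rule hull_minimal)
    show "convex_cone {x::'a. 0 \<le> x}"
      by (simp add: convex_cone_iff add_nonneg_nonneg scaleR_nonneg_nonneg)
  qed auto
qed

lemma closed_linear_image_nonneg:
  fixes f :: "'a::ordered_euclidean_space \<Rightarrow> 'b::euclidean_space"
  assumes "linear f"
  shows "closed (f ` {x. 0 \<le> x})"
  using closed_convex_cone_hull[of "f ` Basis"] assms
  by (simp add: nonneg_eq_convex_cone_hull_Basis convex_cone_hull_linear_image)

definition mbl_epigraph ::
  "real^'n^'p \<Rightarrow> real^'m^'p \<Rightarrow> real^'n \<Rightarrow> real^'m \<Rightarrow> real^'n \<Rightarrow> ((real^'p) \<times> real) set" where
  "mbl_epigraph A G cx cy x =
     {(b, t). \<exists>y. mbl_feasible A G b x y \<and> mbl_objective cx cy x y \<le> t}"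

lemma mbl_epigraph_eq_image_nonneg:
  fixes A :: "real^'n^'p" and G :: "real^'m^'p" and cy :: "real^'m"
  assumes binary: "\<forall>j. x $ j \<in> {0, 1}"
  shows "mbl_epigraph A G cx cy x =
           (+) (A *v x, cx \<bullet> x) `
             (\<lambda>((yp, yn), (s, r)). (G *v (yp - yn) - s, cy \<bullet> (yp - yn) + r)) ` {z. 0 \<le> z}"
    (is "_ = _ ` ?L ` _")
proof (intro equalityI subsetI)
  fix w assume "w \<in> mbl_epigraph A G cx cy x"
  then obtain b t y where w: "w = (b, t)" and y: "mbl_feasible A G b x y" "mbl_objective cx cy x y \<le> t"
    by (auto simp: mbl_epigraph_def)
  define yp where "yp = (\<chi> j. max (y $ j) 0)"
  define yn where "yn = (\<chi> j. max (- y $ j) 0)"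
  have "yp - yn = y" "0 \<le> yp" "0 \<le> yn"
    by (auto simp: yp_def yn_def vec_eq_iff less_eq_vec_def)
  moreover have "0 \<le> A *v x + G *v y - b"
    using y by (simp add: less_eq_vec_def mbl_feasible_def)
  ultimately have "w = (A *v x, cx \<bullet> x) + ?L ((yp, yn), (A *v x + G *v y - b, t - mbl_objective cx cy x y))"
    and "0 \<le> ((yp, yn), (A *v x + G *v y - b, t - mbl_objective cx cy x y))"
    using y by (simp_all add: w mbl_objective_def zero_prod_def)
  then show "w \<in> (+) (A *v x, cx \<bullet> x) ` ?L ` {z. 0 \<le> z}"
    by blast
next
  fix w assume "w \<in> (+) (A *v x, cx \<bullet> x) ` ?L ` {z. 0 \<le> z}"
  then obtain yp yn s r where "0 \<le> ((yp, yn), (s, r))" and w: "w = (A *v x, cx \<bullet> x) + ?L ((yp, yn), (s, r))"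
    by auto
  then have "0 \<le> s" "0 \<le> r"
    by (simp_all add: zero_prod_def)
  moreover have "fst w = A *v x + G *v (yp - yn) - s" "snd w = cx \<bullet> x + cy \<bullet> (yp - yn) + r"
    by (simp_all add: w)
  ultimately have "mbl_feasible A G (fst w) x (yp - yn)" "mbl_objective cx cy x (yp - yn) \<le> snd w"
    using binary by (simp_all add: mbl_feasible_def mbl_objective_def less_eq_vec_def)
  then show "w \<in> mbl_epigraph A G cx cy x"
    by (auto simp: mbl_epigraph_def)
qed

lemma closed_mbl_epigraph: "closed (mbl_epigraph A G cx cy x)"
proof (cases "\<forall>j. x $ j \<in> {0, 1}")
  case True
  have "linear (\<lambda>((yp, yn), (s, r)). (G *v (yp - yn) - s, cy \<bullet> (yp - yn) + r))"
    by (auto simp: linear_iff split_beta matrix_vector_right_distrib matrix_vector_mult_scaleR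
        matrix_vector_mult_diff_distrib inner_add_right inner_diff_right algebra_simps)
  then show ?thesis
    unfolding mbl_epigraph_eq_image_nonneg[OF True]
    by (rule closed_translation[OF closed_linear_image_nonneg])
next
  case False
  then have "mbl_epigraph A G cx cy x = {}"
    by (auto simp: mbl_epigraph_def mbl_feasible_def)
  then show ?thesis
    by simp
qed

lemma eventually_mbl_objective_gt:
  assumes "(b, t) \<notin> mbl_epigraph A G cx cy x"
  shows "\<exists>e>0. \<forall>\<^sub>F b' in nhds b. \<forall>y. mbl_feasible A G b' x y \<longrightarrow> t + e < mbl_objective cx cy x y"
proof -
  have "open (- mbl_epigraph A G cx cy x)"
    by (rule open_Compl) (rule closed_mbl_epigraph)
  then obtain U V where UV: "open U" "open V" "(b, t) \<in> U \<times> V" "U \<times> V \<subseteq> - mbl_epigraph A G cx cy x"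
    using assms by (metis ComplI open_prod_elim)
  obtain e where "e > 0" "ball t e \<subseteq> V"
    using UV open_contains_ball by force
  then have "t + e / 2 \<in> V"
    by (auto simp: dist_real_def)
  have "\<forall>\<^sub>F b' in nhds b. b' \<in> U"
    using UV by (intro eventually_nhds_in_open) auto
  then have "\<forall>\<^sub>F b' in nhds b. \<forall>y. mbl_feasible A G b' x y \<longrightarrow> t + e / 2 < mbl_objective cx cy x y"
  proof (rule eventually_mono)
    fix b' assume "b' \<in> U"
    then have "(b', t + e / 2) \<notin> mbl_epigraph A G cx cy x"
      using UV \<open>t + e / 2 \<in> V\<close> by auto
    then show "\<forall>y. mbl_feasible A G b' x y \<longrightarrow> t + e / 2 < mbl_objective cx cy x y"
      by (auto simp: mbl_epigraph_def)
  qed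
  then show ?thesis
    using \<open>e > 0\<close> by (intro exI[of _ "e / 2"]) auto
qed

lemma eventually_mbl_objective_bounded_below:
  assumes "\<And>y. mbl_feasible A G b x y \<Longrightarrow> c \<le> mbl_objective cx cy x y"
  shows "\<forall>\<^sub>F b' in nhds b. \<forall>y. mbl_feasible A G b' x y \<longrightarrow> c - 1 \<le> mbl_objective cx cy x y"
proof -
  have "(b, c - 1) \<notin> mbl_epigraph A G cx cy x"
    using assms by (force simp: mbl_epigraph_def)
  then obtain e where e: "e > 0"
    "\<forall>\<^sub>F b' in nhds b. \<forall>y. mbl_feasible A G b' x y \<longrightarrow> c - 1 + e < mbl_objective cx cy x y"
    by (blast dest: eventually_mbl_objective_gt)
  from e(2) show ?thesis
    by (rule eventually_mono) (use e(1) in force)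
qed

(* Meaningful only where the fibre is nonempty and bounded below; every lemma about it assumes so. *)
definition mbl_value ::
  "real^'n^'p \<Rightarrow> real^'m^'p \<Rightarrow> real^'n \<Rightarrow> real^'m \<Rightarrow> real^'n \<Rightarrow> real^'p \<Rightarrow> real" where
  "mbl_value A G cx cy x b = Inf {t. (b, t) \<in> mbl_epigraph A G cx cy x}"

lemma mbl_value_attained:
  assumes "mbl_feasible A G b x y0"
    and "\<And>y. mbl_feasible A G b x y \<Longrightarrow> c \<le> mbl_objective cx cy x y"
  shows "\<exists>y. mbl_feasible A G b x y \<and> mbl_objective cx cy x y = mbl_value A G cx cy x b \<and>
             (\<forall>y'. mbl_feasible A G b x y' \<longrightarrow> mbl_objective cx cy x y \<le> mbl_objective cx cy x y')"
proof -
  define W where "W = {t. (b, t) \<in> mbl_epigraph A G cx cy x}"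
  have W_iff: "t \<in> W \<longleftrightarrow> (\<exists>y. mbl_feasible A G b x y \<and> mbl_objective cx cy x y \<le> t)" for t
    by (simp add: W_def mbl_epigraph_def)
  have "closed W"
    unfolding W_def using closed_mbl_epigraph
    by (rule continuous_closed_vimage[of _ "Pair b", unfolded vimage_def]) (intro continuous_intros)
  moreover have "W \<noteq> {}"
    using assms(1) W_iff by blast
  moreover have "bdd_below W"
    using assms(2) W_iff by (force intro: bdd_belowI[of _ c])
  ultimately have "Inf W \<in> W"
    by (intro closed_contains_Inf)
  then obtain y where y: "mbl_feasible A G b x y" "mbl_objective cx cy x y \<le> Inf W"
    using W_iff by blast
  have "Inf W \<le> mbl_objective cx cy x y'" if "mbl_feasible A G b x y'" for y'
    using \<open>bdd_below W\<close> that W_iff by (blast intro: cInf_lower)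
  then show ?thesis
    using y by (intro exI[of _ y]) (auto simp: mbl_value_def W_def[symmetric] intro: order.antisym order.trans)
qed

lemma mbl_feasible_convex_combination:
  assumes "mbl_feasible A G b1 x y1" "mbl_feasible A G b2 x y2" "0 \<le> u" "u \<le> 1"
  shows "mbl_feasible A G ((1 - u) *\<^sub>R b1 + u *\<^sub>R b2) x ((1 - u) *\<^sub>R y1 + u *\<^sub>R y2)"
  unfolding mbl_feasible_def
proof (intro conjI allI)
  fix i
  have "A *v x + G *v ((1 - u) *\<^sub>R y1 + u *\<^sub>R y2)
          = (1 - u) *\<^sub>R (A *v x + G *v y1) + u *\<^sub>R (A *v x + G *v y2)"
    by (simp add: matrix_vector_right_distrib matrix_vector_mult_scaleR algebra_simps)
  moreover have "(1 - u) * b1 $ i \<le> (1 - u) * (A *v x + G *v y1) $ i"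
    "u * b2 $ i \<le> u * (A *v x + G *v y2) $ i"
    using assms by (auto simp: mbl_feasible_def intro: mult_left_mono)
  ultimately show "((1 - u) *\<^sub>R b1 + u *\<^sub>R b2) $ i \<le> (A *v x + G *v ((1 - u) *\<^sub>R y1 + u *\<^sub>R y2)) $ i"
    by simp
  show "x $ i \<in> {0, 1}" for i
    using assms(1) by (simp add: mbl_feasible_def)
qed

lemma mbl_objective_convex_combination:
  "mbl_objective cx cy x ((1 - u) *\<^sub>R y1 + u *\<^sub>R y2)
     = (1 - u) * mbl_objective cx cy x y1 + u * mbl_objective cx cy x y2"
  by (simp add: mbl_objective_def inner_add_right algebra_simps)

lemma convex_on_mbl_value:
  assumes "convex S"
    and feasible: "\<And>b. b \<in> S \<Longrightarrow> \<exists>y. mbl_feasible A G b x y"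
    and bounded: "\<And>b y. b \<in> S \<Longrightarrow> mbl_feasible A G b x y \<Longrightarrow> c \<le> mbl_objective cx cy x y"
  shows "convex_on S (mbl_value A G cx cy x)"
proof (rule convex_onI[OF _ \<open>convex S\<close>])
  have minimizer: "\<exists>y. mbl_feasible A G b x y \<and> mbl_objective cx cy x y = mbl_value A G cx cy x b \<and>
      (\<forall>y'. mbl_feasible A G b x y' \<longrightarrow> mbl_objective cx cy x y \<le> mbl_objective cx cy x y')"
    if "b \<in> S" for b
    using feasible[OF that] bounded[OF that] by (metis mbl_value_attained)
  fix u :: real and b1 b2 assume u: "0 < u" "u < 1" and b12: "b1 \<in> S" "b2 \<in> S"
  obtain y1 y2 where y1: "mbl_feasible A G b1 x y1" "mbl_objective cx cy x y1 = mbl_value A G cx cy x b1"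
    and y2: "mbl_feasible A G b2 x y2" "mbl_objective cx cy x y2 = mbl_value A G cx cy x b2"
    using minimizer b12 by metis
  have "(1 - u) *\<^sub>R b1 + u *\<^sub>R b2 \<in> S"
    using \<open>convex S\<close> b12 u by (simp add: convex_alt)
  then obtain y where "mbl_objective cx cy x y = mbl_value A G cx cy x ((1 - u) *\<^sub>R b1 + u *\<^sub>R b2)"
    "\<forall>y'. mbl_feasible A G ((1 - u) *\<^sub>R b1 + u *\<^sub>R b2) x y' \<longrightarrow> mbl_objective cx cy x y \<le> mbl_objective cx cy x y'"
    using minimizer by blast
  moreover have "mbl_feasible A G ((1 - u) *\<^sub>R b1 + u *\<^sub>R b2) x ((1 - u) *\<^sub>R y1 + u *\<^sub>R y2)"
    using y1 y2 u by (intro mbl_feasible_convex_combination) auto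
  ultimately show "mbl_value A G cx cy x ((1 - u) *\<^sub>R b1 + u *\<^sub>R b2)
      \<le> (1 - u) * mbl_value A G cx cy x b1 + u * mbl_value A G cx cy x b2"
    using y1 y2 by (metis mbl_objective_convex_combination)
qed

lemma isCont_mbl_value:
  assumes "\<forall>\<^sub>F b' in nhds b. \<exists>y. mbl_feasible A G b' x y"
    and "\<And>y. mbl_feasible A G b x y \<Longrightarrow> c \<le> mbl_objective cx cy x y"
  shows "isCont (mbl_value A G cx cy x) b"
proof -
  have "\<forall>\<^sub>F b' in nhds b. \<forall>y. mbl_feasible A G b' x y \<longrightarrow> c - 1 \<le> mbl_objective cx cy x y"
    using assms(2) by (rule eventually_mbl_objective_bounded_below)
  with assms(1) have "\<forall>\<^sub>F b' in nhds b. (\<exists>y. mbl_feasible A G b' x y) \<and>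
      (\<forall>y. mbl_feasible A G b' x y \<longrightarrow> c - 1 \<le> mbl_objective cx cy x y)"
    by (rule eventually_conj)
  then obtain r where "r > 0" and r: "\<And>b'. b' \<in> ball b r \<Longrightarrow> (\<exists>y. mbl_feasible A G b' x y) \<and>
      (\<forall>y. mbl_feasible A G b' x y \<longrightarrow> c - 1 \<le> mbl_objective cx cy x y)"
    by (auto simp: eventually_nhds_metric dist_commute)
  have "convex_on (ball b r) (mbl_value A G cx cy x)"
    using r by (intro convex_on_mbl_value) auto
  then have "continuous_on (ball b r) (mbl_value A G cx cy x)"
    by (intro convex_on_continuous) auto
  then show ?thesis
    using \<open>r > 0\<close> by (simp add: continuous_on_eq_continuous_at)
qed

lemma finite_binary_vectors: "finite {x::real^'n. \<forall>j. x $ j \<in> {0, 1}}"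
proof (rule finite_subset)
  show "{x::real^'n. \<forall>j. x $ j \<in> {0, 1}} \<subseteq> vec_lambda ` (UNIV \<rightarrow>\<^sub>E {0, 1})"
  proof
    fix x :: "real^'n" assume "x \<in> {x. \<forall>j. x $ j \<in> {0, 1}}"
    then have "vec_nth x \<in> UNIV \<rightarrow>\<^sub>E {0, 1}" by auto
    then show "x \<in> vec_lambda ` (UNIV \<rightarrow>\<^sub>E {0, 1})"
      by (metis image_eqI vec_nth_inverse)
  qed
qed (intro finite_imageI finite_PiE; simp)

lemma mbl_value_eq_objective_if_optimal:
  assumes "mbl_optimal A G cx cy b x y"
  shows "mbl_value A G cx cy x b = mbl_objective cx cy x y"
  unfolding mbl_value_def using assms
  by (intro cInf_eq_minimum) (force simp: mbl_epigraph_def mbl_optimal_def)+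

lemma eventually_lt_mbl_objective:
  assumes "isCont f b" and "(b, f b) \<notin> mbl_epigraph A G cx cy x"
  shows "\<forall>\<^sub>F b' in nhds b. \<forall>y. mbl_feasible A G b' x y \<longrightarrow> f b' < mbl_objective cx cy x y"
proof -
  obtain e where e: "e > 0"
    "\<forall>\<^sub>F b' in nhds b. \<forall>y. mbl_feasible A G b' x y \<longrightarrow> f b + e < mbl_objective cx cy x y"
    using assms(2) by (blast dest: eventually_mbl_objective_gt)
  have "(f \<longlongrightarrow> f b) (nhds b)"
    using assms(1) by (simp add: isCont_def tendsto_at_iff_tendsto_nhds)
  then have "\<forall>\<^sub>F b' in nhds b. f b' < f b + e"
    using e(1) by (simp add: order_tendstoD(2))
  with e(2) show ?thesis
    by eventually_elim force
qed

lemma mbl_optimal_integer_part_unique: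
  assumes others: "\<forall>x \<in> {x. \<forall>j. x $ j \<in> {0, 1}} - {xs}. \<forall>y.
                     mbl_feasible A G b x y \<longrightarrow> mbl_value A G cx cy xs b < mbl_objective cx cy x y"
    and "\<forall>y. mbl_feasible A G b xs y \<longrightarrow> c \<le> mbl_objective cx cy xs y"
    and "\<exists>y. mbl_feasible A G b xs y"
  shows "(\<exists>y. mbl_optimal A G cx cy b xs y) \<and> (\<forall>x y. mbl_optimal A G cx cy b x y \<longrightarrow> x = xs)"
proof -
  obtain y where y: "mbl_feasible A G b xs y" "mbl_objective cx cy xs y = mbl_value A G cx cy xs b"
    "\<And>y'. mbl_feasible A G b xs y' \<Longrightarrow> mbl_objective cx cy xs y \<le> mbl_objective cx cy xs y'"
    using assms(2,3) mbl_value_attained by metis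
  have other_gt: "mbl_objective cx cy xs y < mbl_objective cx cy x y'"
    if "mbl_feasible A G b x y'" "x \<noteq> xs" for x y'
    using others that y(2) by (auto simp: mbl_feasible_def)
  have "mbl_optimal A G cx cy b xs y"
    unfolding mbl_optimal_def using y other_gt by (metis less_le)
  moreover have "x = xs" if "mbl_optimal A G cx cy b x y'" for x y'
    using that y other_gt[of x y'] unfolding mbl_optimal_def by fastforce
  ultimately show ?thesis
    by blast
qed

theorem proposition1:
  fixes A :: "real^'n^'p" and G :: "real^'m^'p"
    and cx :: "real^'n" and cy :: "real^'m"
    and b :: "real^'p" and xs :: "real^'n" and ys :: "real^'m"
  assumes opt: "mbl_optimal A G cx cy b xs ys"
    and uniq: "\<forall>x y. mbl_optimal A G cx cy b x y \<longrightarrow> x = xs"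
    and feas_nbhd: "\<exists>U. open U \<and> b \<in> U \<and> (\<forall>b'\<in>U. \<exists>y. mbl_feasible A G b' xs y)"
  shows "\<exists>V. open V \<and> b \<in> V \<and>
           (\<forall>b'\<in>V. (\<exists>y. mbl_optimal A G cx cy b' xs y) \<and>
                    (\<forall>x y. mbl_optimal A G cx cy b' x y \<longrightarrow> x = xs))"
proof -
  define v where "v = mbl_objective cx cy xs ys"
  have v_le: "\<And>x y. mbl_feasible A G b x y \<Longrightarrow> v \<le> mbl_objective cx cy x y"
    using opt by (simp add: v_def mbl_optimal_def)
  have feasible_near: "\<forall>\<^sub>F b' in nhds b. \<exists>y. mbl_feasible A G b' xs y"
    using feas_nbhd by (auto simp: eventually_nhds)
  then have cont: "isCont (mbl_value A G cx cy xs) b"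
    using v_le by (rule isCont_mbl_value)
  have "\<forall>\<^sub>F b' in nhds b. \<forall>y. mbl_feasible A G b' x y \<longrightarrow> mbl_value A G cx cy xs b' < mbl_objective cx cy x y"
    if "x \<in> {x. \<forall>j. x $ j \<in> {0, 1}} - {xs}" for x
  proof (rule eventually_lt_mbl_objective[OF cont])
    show "(b, mbl_value A G cx cy xs b) \<notin> mbl_epigraph A G cx cy x"
      using that uniq v_le mbl_value_eq_objective_if_optimal[OF opt]
      by (force simp: v_def mbl_epigraph_def mbl_optimal_def)
  qed
  then have "\<forall>\<^sub>F b' in nhds b. \<forall>x \<in> {x. \<forall>j. x $ j \<in> {0, 1}} - {xs}.
      \<forall>y. mbl_feasible A G b' x y \<longrightarrow> mbl_value A G cx cy xs b' < mbl_objective cx cy x y"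
    using finite_binary_vectors by (intro eventually_ball_finite) auto
  moreover have "\<forall>\<^sub>F b' in nhds b. \<forall>y. mbl_feasible A G b' xs y \<longrightarrow> v - 1 \<le> mbl_objective cx cy xs y"
    using v_le by (rule eventually_mbl_objective_bounded_below)
  ultimately have "\<forall>\<^sub>F b' in nhds b. (\<exists>y. mbl_optimal A G cx cy b' xs y) \<and>
      (\<forall>x y. mbl_optimal A G cx cy b' x y \<longrightarrow> x = xs)"
    using feasible_near by eventually_elim (rule mbl_optimal_integer_part_unique)
  then show ?thesis
    by (simp add: eventually_nhds)
qed

end
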